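(* Let $\mathfrak g$ be a finite-dimensional nilpotent Lie algebra over a field $k$ of characteristic zero, and let $x\cdot y$ be an LR-structure on $\mathfrak g$. Then there exists a complete LR-structure $x\circ y$ on $\mathfrak g$ such that $\mathfrak g\circ\mathfrak g\subseteq \mathfrak g\cdot\mathfrak g$, where $\mathfrak g\circ\mathfrak g$ and $\mathfrak g\cdot\mathfrak g$ denote the linear spans of all products $x\circ y$, respectively $x\cdot y$, with $x,y\in\mathfrak g$.
   Context: An LR-algebra is a vector space $A$ with a bilinear product $\cdot$ satisfying $x\cdot(y\cdot z)=y\cdot(x\cdot z)$ and $(x\cdot y)\cdot z=(x\cdot z)\cdot y$ for all $x,y,z\in A$. An LR-structure on a Lie algebra $\mathfrak g$ is an LR-algebra product on the underlying vector space of $\mathfrak g$ such that $x\cdot y-y\cdot x=[x,y]$ for all $x,y$. An LR-structure is complete if all right multiplications $R(x)\colon y\mapsto y\cdot x$ are nilpotent. *)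

theory Defs
  imports Complex_Main
begin

text \<open>A vector space V over a field k is modelled by a carrier type 'v with
  scalar multiplication scale :: 'k \<Rightarrow> 'v \<Rightarrow> 'v satisfying the locale vector_space.\<close>

definition bilinear_op :: "('k::field \<Rightarrow> 'v::ab_group_add \<Rightarrow> 'v) \<Rightarrow> ('v \<Rightarrow> 'v \<Rightarrow> 'v) \<Rightarrow> bool" where
  "bilinear_op scale f \<longleftrightarrow>
     (\<forall>x. module_hom scale scale (\<lambda>y. f x y)) \<and> (\<forall>y. module_hom scale scale (\<lambda>x. f x y))"

definition finite_dim :: "('k::field \<Rightarrow> 'v::ab_group_add \<Rightarrow> 'v) \<Rightarrow> bool" where
  "finite_dim scale \<longleftrightarrow> (\<exists>B. finite B \<and> module.span scale B = UNIV)"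

definition lie_algebra :: "('k::field \<Rightarrow> 'v::ab_group_add \<Rightarrow> 'v) \<Rightarrow> ('v \<Rightarrow> 'v \<Rightarrow> 'v) \<Rightarrow> bool" where
  "lie_algebra scale br \<longleftrightarrow> vector_space scale \<and> bilinear_op scale br \<and>
     (\<forall>x. br x x = 0) \<and>
     (\<forall>x y z. br x (br y z) + br y (br z x) + br z (br x y) = 0)"

fun lower_central :: "('k::field \<Rightarrow> 'v::ab_group_add \<Rightarrow> 'v) \<Rightarrow> ('v \<Rightarrow> 'v \<Rightarrow> 'v) \<Rightarrow> nat \<Rightarrow> 'v set" where
  "lower_central scale br 0 = UNIV"
| "lower_central scale br (Suc i) =
     module.span scale {br x y | x y. y \<in> lower_central scale br i}"

definition nilpotent_lie :: "('k::field \<Rightarrow> 'v::ab_group_add \<Rightarrow> 'v) \<Rightarrow> ('v \<Rightarrow> 'v \<Rightarrow> 'v) \<Rightarrow> bool" where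
  "nilpotent_lie scale br \<longleftrightarrow> (\<exists>n. lower_central scale br n = {0})"

definition LR_algebra :: "('k::field \<Rightarrow> 'v::ab_group_add \<Rightarrow> 'v) \<Rightarrow> ('v \<Rightarrow> 'v \<Rightarrow> 'v) \<Rightarrow> bool" where
  "LR_algebra scale p \<longleftrightarrow> bilinear_op scale p \<and>
     (\<forall>x y z. p x (p y z) = p y (p x z)) \<and>
     (\<forall>x y z. p (p x y) z = p (p x z) y)"

definition LR_structure :: "('k::field \<Rightarrow> 'v::ab_group_add \<Rightarrow> 'v) \<Rightarrow> ('v \<Rightarrow> 'v \<Rightarrow> 'v) \<Rightarrow> ('v \<Rightarrow> 'v \<Rightarrow> 'v) \<Rightarrow> bool" where
  "LR_structure scale br p \<longleftrightarrow> LR_algebra scale p \<and> (\<forall>x y. p x y - p y x = br x y)"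

definition complete_LR :: "('v::ab_group_add \<Rightarrow> 'v \<Rightarrow> 'v) \<Rightarrow> bool" where
  "complete_LR p \<longleftrightarrow> (\<forall>x. \<exists>n. ((\<lambda>y. p y x) ^^ n) = (\<lambda>_. 0))"

definition product_span :: "('k::field \<Rightarrow> 'v::ab_group_add \<Rightarrow> 'v) \<Rightarrow> ('v \<Rightarrow> 'v \<Rightarrow> 'v) \<Rightarrow> 'v set" where
  "product_span scale p = module.span scale {p x y | x y. True}"

end

theory Submission
  imports Defs
begin

(* Write R(w) y = y . w.  In an LR-algebra all right multiplications commute.
   For one vector u, split V = V0 (+) V1 by the Fitting decomposition of R(u), V0 being
   the part where R(u) is nilpotent and V1 the part where it is invertible.  Every R(w)
   leaves both parts invariant, V0 . V1 = 0, and V1 is commutative (its elements are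
   products).  With P the projection onto V0 along V1, the new product x o y = x . P(y)
   is again an LR-structure with the same commutator, R_o(u) is nilpotent, and every R(w)
   that was nilpotent stays nilpotent; the part on V1 uses that ad is nilpotent, which
   is where nilpotency of the Lie algebra enters.  Repeating this for the vectors of a
   basis and using that the vectors w with R(w) nilpotent form a subspace (a sum of
   commuting nilpotent maps is nilpotent) gives a complete structure.  The argument works
   over any field. *)

definition nilpotent :: "('a \<Rightarrow> 'a::zero) \<Rightarrow> bool" where
  "nilpotent f \<longleftrightarrow> (\<exists>n. f ^^ n = (\<lambda>_. 0))"

lemma funpow_commute:
  assumes "\<And>x. f (g x) = g (f x)"
  shows "f ((g ^^ n) x) = (g ^^ n) (f x)"
  by (induction n) (simp_all add: assms)

lemma funpow_split:
  assumes "m \<le> i"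
  shows "(f ^^ i) x = (f ^^ (i - m)) ((f ^^ m) x)"
proof -
  have "f ^^ i = f ^^ (i - m) \<circ> f ^^ m" using assms funpow_add[of "i - m" m f] by simp
  then show ?thesis by simp
qed

lemma funpow_agree_on_invariant:
  assumes inv: "\<And>x. x \<in> U \<Longrightarrow> g x \<in> U" and agree: "\<And>x. x \<in> U \<Longrightarrow> f x = g x"
    and x: "x \<in> U"
  shows "(f ^^ n) x = (g ^^ n) x"
proof -
  have "(g ^^ n) x \<in> U \<and> (f ^^ n) x = (g ^^ n) x"
    by (induction n) (simp_all add: x inv agree)
  then show ?thesis ..
qed

definition complementary :: "('k::field \<Rightarrow> 'v::ab_group_add \<Rightarrow> 'v) \<Rightarrow> 'v set \<Rightarrow> 'v set \<Rightarrow> bool" where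
  "complementary scale U W \<longleftrightarrow> module.subspace scale U \<and> module.subspace scale W \<and>
     U \<inter> W = {0} \<and> (\<forall>v. \<exists>x\<in>U. v - x \<in> W)"

definition proj_along :: "'v::ab_group_add set \<Rightarrow> 'v set \<Rightarrow> 'v \<Rightarrow> 'v" where
  "proj_along U W v = (THE x. x \<in> U \<and> v - x \<in> W)"

context vector_space begin

lemma linear_endoI:
  assumes "\<And>x y. T (x + y) = T x + T y" and "\<And>c x. T (c *s x) = c *s T x"
  shows "Vector_Spaces.linear scale scale T"
proof -
  have "vector_space scale" by unfold_locales
  then show ?thesis unfolding Vector_Spaces.linear_iff using assms by blast
qed

lemma linear_endo:
  assumes "Vector_Spaces.linear scale scale T"
  shows "T 0 = 0" and "T (x + y) = T x + T y" and "T (x - y) = T x - T y"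
    and "T (c *s x) = c *s T x" and "V \<subseteq> span B \<Longrightarrow> T ` V \<subseteq> span (T ` B)"
    and "subspace {x. T x = 0}" and "subspace (range T)"
  using assms[folded module_hom_iff_linear]
  by (simp_all add: module_hom.zero module_hom.add module_hom.diff module_hom.scale
      module_hom.spans_image module_hom.subspace_kernel module_hom.subspace_image)

lemma linear_funpow:
  assumes "Vector_Spaces.linear scale scale T"
  shows "Vector_Spaces.linear scale scale (T ^^ n)"
proof (induction n)
  case 0
  show ?case using linear_ident by simp
next
  case (Suc n)
  then show ?case using Vector_Spaces.linear_compose[OF Suc assms] by (simp add: comp_def)
qed

lemma funpow_linear_zero:
  assumes "Vector_Spaces.linear scale scale T"
  shows "(T ^^ n) 0 = 0"
  using linear_endo(1)[OF linear_funpow[OF assms]] .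

(* The sum of two commuting nilpotent linear maps is nilpotent: the k-th iterate of f + g
   lies in the span of the vectors f^i g^j v with i + j = k. *)
lemma nilpotent_add_commuting:
  assumes f: "Vector_Spaces.linear scale scale f" and g: "Vector_Spaces.linear scale scale g"
    and comm: "\<And>x. f (g x) = g (f x)"
    and fm: "f ^^ m = (\<lambda>_. 0)" and gn: "g ^^ n = (\<lambda>_. 0)"
  shows "(\<lambda>x. f x + g x) ^^ (m + n) = (\<lambda>_. 0)"
proof
  fix v
  define S where "S k = {(f ^^ i) ((g ^^ j) v) | i j. i + j = k}" for k
  have f_step: "f ` S k \<subseteq> S (Suc k)" for k
  proof
    fix y assume "y \<in> f ` S k"
    then obtain i j where "y = (f ^^ Suc i) ((g ^^ j) v)" "Suc i + j = Suc k"
      unfolding S_def by auto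
    then show "y \<in> S (Suc k)" unfolding S_def by blast
  qed
  have g_step: "g ` S k \<subseteq> S (Suc k)" for k
  proof
    fix y assume "y \<in> g ` S k"
    then obtain i j where "y = g ((f ^^ i) ((g ^^ j) v))" "i + Suc j = Suc k"
      unfolding S_def by auto
    then have "y = (f ^^ i) ((g ^^ Suc j) v)" by (simp add: funpow_commute[of g f, OF comm[symmetric]])
    with \<open>i + Suc j = Suc k\<close> show "y \<in> S (Suc k)" unfolding S_def by blast
  qed
  have span_step: "h ` span (S k) \<subseteq> span (S (Suc k))"
    if "Vector_Spaces.linear scale scale h" and "h ` S k \<subseteq> S (Suc k)" for h k
    using linear_endo(5)[OF that(1) order_refl, of "S k"] span_mono[OF that(2)] by blast
  have iterate_in_span: "((\<lambda>x. f x + g x) ^^ k) v \<in> span (S k)" for k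
  proof (induction k)
    case 0
    have "v \<in> S 0" unfolding S_def by force
    then show ?case by (simp add: span_base)
  next
    case (Suc k)
    let ?x = "((\<lambda>x. f x + g x) ^^ k) v"
    have "f ?x \<in> span (S (Suc k))" and "g ?x \<in> span (S (Suc k))"
      using span_step[OF f f_step] span_step[OF g g_step] Suc by blast+
    then show ?case by (simp add: span_add)
  qed
  have "S (m + n) \<subseteq> {0}"
  proof
    fix y assume "y \<in> S (m + n)"
    then obtain i j where y: "y = (f ^^ i) ((g ^^ j) v)" and ij: "i + j = m + n"
      unfolding S_def by blast
    show "y \<in> {0}"
    proof (cases "m \<le> i")
      case True
      then have "y = (f ^^ (i - m)) ((f ^^ m) ((g ^^ j) v))"
        unfolding y by (rule funpow_split)
      then show ?thesis by (simp add: fm funpow_linear_zero[OF f])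
    next
      case False
      then have "(g ^^ j) v = (g ^^ (j - n)) ((g ^^ n) v)"
        using ij by (intro funpow_split) simp
      then show ?thesis by (simp add: y gn funpow_linear_zero[OF f] funpow_linear_zero[OF g])
    qed
  qed
  then have "((\<lambda>x. f x + g x) ^^ (m + n)) v \<in> span {0}"
    using iterate_in_span[of "m + n"] span_mono by blast
  then show "((\<lambda>x. f x + g x) ^^ (m + n)) v = 0" by simp
qed

lemma nilpotent_from_complement:
  assumes Q: "Vector_Spaces.linear scale scale Q" and sum: "\<And>v. \<exists>x\<in>U. v - x \<in> W"
    and QU: "\<And>x. x \<in> U \<Longrightarrow> (Q ^^ a) x = 0" and QW: "\<And>y. y \<in> W \<Longrightarrow> (Q ^^ b) y = 0"
  shows "Q ^^ (a + b) = (\<lambda>_. 0)"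
proof
  fix v
  obtain x where x: "x \<in> U" and y: "v - x \<in> W" using sum by blast
  have "(Q ^^ (a + b)) x = (Q ^^ b) ((Q ^^ a) x)"
    by (simp add: funpow_add add.commute[of a b])
  also have "\<dots> = 0" by (simp add: QU[OF x] funpow_linear_zero[OF Q])
  finally have "(Q ^^ (a + b)) x = 0" .
  moreover have "(Q ^^ (a + b)) (v - x) = 0"
    by (simp add: funpow_add QW[OF y] funpow_linear_zero[OF Q])
  ultimately show "(Q ^^ (a + b)) v = 0"
    using linear_endo(3)[OF linear_funpow[OF Q], of "a + b" v x] by simp
qed

lemma proj_along_unique:
  assumes "complementary scale U W" and "x \<in> U" and "v - x \<in> W"
  shows "proj_along U W v = x"
  unfolding proj_along_def
proof (rule the_equality)
  show "x \<in> U \<and> v - x \<in> W" using assms by blast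
next
  fix x' assume x': "x' \<in> U \<and> v - x' \<in> W"
  have "x' - x \<in> U" using assms x' unfolding complementary_def by (simp add: subspace_diff)
  moreover have "x' - x = (v - x) - (v - x')" by simp
  then have "x' - x \<in> W" using assms x' unfolding complementary_def by (metis subspace_diff)
  ultimately have "x' - x \<in> U \<inter> W" by blast
  then show "x' = x" using assms(1) unfolding complementary_def by simp
qed

lemma proj_along_mem:
  assumes "complementary scale U W"
  shows "proj_along U W v \<in> U" and "v - proj_along U W v \<in> W"
proof -
  obtain x where "x \<in> U" "v - x \<in> W" using assms unfolding complementary_def by blast
  then show "proj_along U W v \<in> U" "v - proj_along U W v \<in> W"
    using proj_along_unique[OF assms] by simp_all
qed

lemma linear_proj_along:
  assumes c: "complementary scale U W"
  shows "Vector_Spaces.linear scale scale (proj_along U W)"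
proof (rule linear_endoI)
  have U: "subspace U" and W: "subspace W" using c unfolding complementary_def by blast+
  note mem = proj_along_mem[OF c]
  fix x y c
  have add: "(x + y) - (proj_along U W x + proj_along U W y)
      = (x - proj_along U W x) + (y - proj_along U W y)" by simp
  show "proj_along U W (x + y) = proj_along U W x + proj_along U W y"
    using mem subspace_add[OF U] subspace_add[OF W]
    by (intro proj_along_unique[OF c]) (simp_all only: add)
  have scale: "c *s x - c *s proj_along U W x = c *s (x - proj_along U W x)"
    by (simp add: scale_right_diff_distrib)
  show "proj_along U W (c *s x) = c *s proj_along U W x"
    using mem subspace_scale[OF U] subspace_scale[OF W]
    by (intro proj_along_unique[OF c]) (simp_all only: scale)
qed

lemma proj_along_commute:
  assumes c: "complementary scale U W" and S: "Vector_Spaces.linear scale scale S"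
    and SU: "S ` U \<subseteq> U" and SW: "S ` W \<subseteq> W"
  shows "proj_along U W (S v) = S (proj_along U W v)"
proof (rule proj_along_unique[OF c])
  show "S (proj_along U W v) \<in> U" using SU proj_along_mem(1)[OF c] by blast
  have "S v - S (proj_along U W v) = S (v - proj_along U W v)" by (simp add: linear_endo(3)[OF S])
  then show "S v - S (proj_along U W v) \<in> W" using SW proj_along_mem(2)[OF c] by auto
qed

end

context finite_dimensional_vector_space begin

lemma decreasing_subspaces_stabilize:
  assumes "\<And>k. subspace (S k)" and "\<And>k. S (Suc k) \<subseteq> S k"
  shows "\<exists>n. \<forall>m\<ge>n. S m = S n"
proof -
  obtain n where n: "\<forall>k. dim (S n) \<le> dim (S k)"
    using ex_has_least_nat[of "\<lambda>_. True" 0 "\<lambda>k. dim (S k)"] by auto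
  have "S m = S n" if "m \<ge> n" for m
    using subspace_dim_equal[OF assms(1) assms(1) lift_Suc_antimono_le[of S, OF assms(2) that]] n
    by blast
  then show ?thesis by blast
qed

lemma increasing_subspaces_stabilize:
  assumes "\<And>k. subspace (S k)" and "\<And>k. S k \<subseteq> S (Suc k)"
  shows "\<exists>n. \<forall>m\<ge>n. S m = S n"
proof -
  obtain n where n: "\<forall>k. dimension - dim (S n) \<le> dimension - dim (S k)"
    using ex_has_least_nat[of "\<lambda>_. True" 0 "\<lambda>k. dimension - dim (S k)"] by auto
  have "S m = S n" if "m \<ge> n" for m
  proof -
    have "dim (S m) \<le> dim (S n)"
      using n[rule_format, of m] dim_subset_UNIV[of "S m"] dim_subset_UNIV[of "S n"] by linarith
    then show ?thesis
      using subspace_dim_equal[OF assms(1) assms(1) lift_Suc_mono_le[of S, OF assms(2) that]] by simp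
  qed
  then show ?thesis by blast
qed

lemma fitting_decomposition:
  assumes T: "Vector_Spaces.linear scale scale T"
  obtains N where "complementary scale {x. (T ^^ N) x = 0} (range (T ^^ N))"
    and "range (T ^^ N) \<subseteq> T ` range (T ^^ N)"
proof -
  have lin: "Vector_Spaces.linear scale scale (T ^^ k)" for k by (rule linear_funpow[OF T])
  obtain n1 where n1: "\<forall>m\<ge>n1. range (T ^^ m) = range (T ^^ n1)"
  proof (atomize_elim, rule decreasing_subspaces_stabilize)
    show "subspace (range (T ^^ k))" for k by (rule linear_endo(7)[OF lin])
    show "range (T ^^ Suc k) \<subseteq> range (T ^^ k)" for k by (auto simp: funpow_swap1)
  qed
  obtain n2 where n2: "\<forall>m\<ge>n2. {x. (T ^^ m) x = 0} = {x. (T ^^ n2) x = 0}"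
  proof (atomize_elim, rule increasing_subspaces_stabilize)
    show "subspace {x. (T ^^ k) x = 0}" for k by (rule linear_endo(6)[OF lin])
    show "{x. (T ^^ k) x = 0} \<subseteq> {x. (T ^^ Suc k) x = 0}" for k by (auto simp: linear_endo(1)[OF T])
  qed
  define N where "N = max n1 n2"
  have range_stable: "range (T ^^ m) = range (T ^^ N)" if "m \<ge> N" for m
    using n1 that unfolding N_def by (metis max.cobounded1 order_trans)
  have kernel_stable: "{x. (T ^^ m) x = 0} = {x. (T ^^ N) x = 0}" if "m \<ge> N" for m
    using n2 that unfolding N_def by (metis max.cobounded2 order_trans)
  have disjoint: "x = 0" if "(T ^^ N) x = 0" and "x \<in> range (T ^^ N)" for x
  proof -
    obtain y where y: "x = (T ^^ N) y" using \<open>x \<in> range (T ^^ N)\<close> by blast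
    then have "(T ^^ (N + N)) y = 0" using that(1) by (simp add: funpow_add)
    then have "(T ^^ N) y = 0" using kernel_stable[of "N + N"] by auto
    then show "x = 0" using y by simp
  qed
  have sum: "\<exists>x\<in>{x. (T ^^ N) x = 0}. v - x \<in> range (T ^^ N)" for v
  proof -
    obtain w where w: "(T ^^ N) v = (T ^^ (N + N)) w"
      using range_stable[of "N + N"] by (metis le_add1 rangeE rangeI)
    have "(T ^^ N) (v - (T ^^ N) w) = 0"
      using w by (simp add: linear_endo(3)[OF lin] funpow_add)
    then show ?thesis by (intro bexI[of _ "v - (T ^^ N) w"]) simp_all
  qed
  have "0 \<in> range (T ^^ N)" using linear_endo(1)[OF lin, of N] by (metis rangeI)
  then have "{x. (T ^^ N) x = 0} \<inter> range (T ^^ N) = {0}"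
    using disjoint linear_endo(1)[OF lin] by auto
  then have "complementary scale {x. (T ^^ N) x = 0} (range (T ^^ N))"
    unfolding complementary_def using linear_endo(6,7)[OF lin] sum by blast
  moreover have "range (T ^^ N) \<subseteq> T ` range (T ^^ N)"
  proof
    fix a assume "a \<in> range (T ^^ N)"
    then obtain y where "a = (T ^^ Suc N) y" using range_stable[of "Suc N"] by auto
    then show "a \<in> T ` range (T ^^ N)" by simp
  qed
  ultimately show thesis using that by blast
qed

lemma commuting_map_invariant:
  assumes S: "Vector_Spaces.linear scale scale S" and comm: "\<And>y. S (T y) = T (S y)"
  shows "S ` {x. (T ^^ N) x = 0} \<subseteq> {x. (T ^^ N) x = 0}" and "S ` range (T ^^ N) \<subseteq> range (T ^^ N)"
proof -
  have iterate: "S ((T ^^ N) y) = (T ^^ N) (S y)" for y by (rule funpow_commute[of S T, OF comm])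
  show "S ` {x. (T ^^ N) x = 0} \<subseteq> {x. (T ^^ N) x = 0}"
    using iterate linear_endo(1)[OF S] by (auto simp flip: iterate)
  show "S ` range (T ^^ N) \<subseteq> range (T ^^ N)" using iterate by auto
qed

end

locale LR_algebra_fd = finite_dimensional_vector_space scale Basis
  for scale :: "'k::field \<Rightarrow> 'v::ab_group_add \<Rightarrow> 'v" and Basis :: "'v set" +
  fixes dot :: "'v \<Rightarrow> 'v \<Rightarrow> 'v"
  assumes LR: "LR_algebra scale dot"
begin

lemma linear_right_mult: "Vector_Spaces.linear scale scale (\<lambda>y. dot y w)"
  and linear_left_mult: "Vector_Spaces.linear scale scale (\<lambda>y. dot x y)"
  using LR unfolding LR_algebra_def bilinear_op_def module_hom_iff_linear by blast+

lemma left_comm: "dot x (dot y z) = dot y (dot x z)"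
  and right_comm: "dot (dot x y) z = dot (dot x z) y"
  using LR unfolding LR_algebra_def by blast+

lemma dot_add_left: "dot (x + x') y = dot x y + dot x' y"
  and dot_diff_left: "dot (x - x') y = dot x y - dot x' y"
  and dot_scale_left: "dot (scale c x) y = scale c (dot x y)"
  using linear_endo(2-4)[OF linear_right_mult] by blast+

lemma dot_add_right: "dot x (y + y') = dot x y + dot x y'"
  and dot_diff_right: "dot x (y - y') = dot x y - dot x y'"
  and dot_scale_right: "dot x (scale c y) = scale c (dot x y)"
  and dot_zero_right: "dot x 0 = 0"
  using linear_endo(1-4)[OF linear_left_mult] by blast+

lemma products_commute: "dot (dot x y) (dot z w) = dot (dot z w) (dot x y)"
proof -
  have "dot (dot x y) (dot z w) = dot (dot x (dot z w)) y" by (rule right_comm)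
  also have "\<dots> = dot (dot z (dot x w)) y" by (simp only: left_comm[of x z w])
  also have "\<dots> = dot (dot z y) (dot x w)" by (rule right_comm)
  also have "\<dots> = dot x (dot (dot z y) w)" by (rule left_comm)
  also have "\<dots> = dot x (dot (dot z w) y)" by (simp only: right_comm[of z y w])
  also have "\<dots> = dot (dot z w) (dot x y)" by (rule left_comm)
  finally show ?thesis .
qed

(* The vectors w with nilpotent right multiplication form a subspace, because right
   multiplications commute. *)
lemma right_nilpotent_subspace: "subspace {w. nilpotent (\<lambda>y. dot y w)}"
proof (rule subspaceI, unfold mem_Collect_eq)
  have "(\<lambda>y. dot y 0) ^^ 1 = (\<lambda>_. 0)" by (simp add: dot_zero_right)
  then show "nilpotent (\<lambda>y. dot y 0)" unfolding nilpotent_def by blast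
next
  fix w w' assume "nilpotent (\<lambda>y. dot y w)" "nilpotent (\<lambda>y. dot y w')"
  then obtain m n where "(\<lambda>y. dot y w) ^^ m = (\<lambda>_. 0)" "(\<lambda>y. dot y w') ^^ n = (\<lambda>_. 0)"
    unfolding nilpotent_def by blast
  then have "(\<lambda>y. dot y w + dot y w') ^^ (m + n) = (\<lambda>_. 0)"
    by (intro nilpotent_add_commuting[OF linear_right_mult linear_right_mult] right_comm)
  then show "nilpotent (\<lambda>y. dot y (w + w'))"
    unfolding nilpotent_def dot_add_right by blast
next
  fix c w assume "nilpotent (\<lambda>y. dot y w)"
  then obtain n where n: "(\<lambda>y. dot y w) ^^ n = (\<lambda>_. 0)" unfolding nilpotent_def by blast
  have "((\<lambda>y. dot y (scale c w)) ^^ k) y = scale (c ^ k) (((\<lambda>y. dot y w) ^^ k) y)" for k y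
    by (induction k) (simp_all add: dot_scale_right dot_scale_left)
  then have "(\<lambda>y. dot y (scale c w)) ^^ n = (\<lambda>_. 0)" using n by (simp add: fun_eq_iff)
  then show "nilpotent (\<lambda>y. dot y (scale c w))" unfolding nilpotent_def by blast
qed

lemma complete_if_basis_complete:
  assumes "\<And>b. b \<in> Basis \<Longrightarrow> nilpotent (\<lambda>y. dot y b)"
  shows "nilpotent (\<lambda>y. dot y x)"
  using span_minimal[OF _ right_nilpotent_subspace] assms span_Basis by blast

end

(* A splitting V = V0 (+) V1 with the properties of the Fitting decomposition of R(u):
   both parts are invariant under all linear maps commuting with R(u), and R(u) maps V1
   onto itself. *)
locale LR_fitting_split = LR_algebra_fd scale Basis dot
  for scale :: "'k::field \<Rightarrow> 'v::ab_group_add \<Rightarrow> 'v" and Basis dot +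
  fixes u :: 'v and V0 V1 :: "'v set"
  assumes complement: "complementary scale V0 V1"
    and commuting_invariant: "\<And>S. Vector_Spaces.linear scale scale S \<Longrightarrow>
          (\<And>y. S (dot y u) = dot (S y) u) \<Longrightarrow> S ` V0 \<subseteq> V0 \<and> S ` V1 \<subseteq> V1"
    and V1_image: "V1 \<subseteq> (\<lambda>y. dot y u) ` V1"
begin

definition P :: "'v \<Rightarrow> 'v" where
  "P = proj_along V0 V1"

definition circ :: "'v \<Rightarrow> 'v \<Rightarrow> 'v" where
  "circ x y = dot x (P y)"

lemma P_mem: "P y \<in> V0" and P_rest_mem: "y - P y \<in> V1"
  unfolding P_def using proj_along_mem[OF complement] by blast+

lemma linear_P: "Vector_Spaces.linear scale scale P"
  unfolding P_def by (rule linear_proj_along[OF complement])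

lemma V0_V1_disjoint: "x \<in> V0 \<Longrightarrow> x \<in> V1 \<Longrightarrow> x = 0"
  using complement unfolding complementary_def by blast

(* Right multiplications commute with R(u), so they preserve V0 and V1. *)
lemma right_mult_invariant: "(\<lambda>y. dot y w) ` V0 \<subseteq> V0 \<and> (\<lambda>y. dot y w) ` V1 \<subseteq> V1"
  by (rule commuting_invariant[OF linear_right_mult]) (rule right_comm)

lemma right_mult_V0: "x \<in> V0 \<Longrightarrow> dot x w \<in> V0"
  and right_mult_V1: "a \<in> V1 \<Longrightarrow> dot a w \<in> V1"
  using right_mult_invariant[of w] by blast+

lemma P_right_mult: "P (dot y w) = dot (P y) w"
  unfolding P_def
  using proj_along_commute[OF complement linear_right_mult] right_mult_invariant by blast

(* V1 is also a left ideal: a = b . u with b in V1, and z . (b . u) = b . (z . u). *)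
lemma left_mult_V1:
  assumes "a \<in> V1" shows "dot z a \<in> V1"
proof -
  obtain b where b: "b \<in> V1" "a = dot b u" using V1_image assms by blast
  then have "dot z a = dot b (dot z u)" by (simp add: left_comm)
  then show ?thesis using right_mult_V1[OF b(1)] by simp
qed

(* V0 . V1 lies in V0 and in V1, so it vanishes. *)
lemma V0_V1_mult_zero: "x \<in> V0 \<Longrightarrow> a \<in> V1 \<Longrightarrow> dot x a = 0"
  using V0_V1_disjoint right_mult_V0 left_mult_V1 by blast

(* V1 consists of products, so it is commutative. *)
lemma V1_commutative:
  assumes "a \<in> V1" and "b \<in> V1" shows "dot a b = dot b a"
proof -
  obtain a' b' where "a = dot a' u" and "b = dot b' u" using V1_image assms by blast
  then show ?thesis by (simp add: products_commute)
qed

lemma V0_left_mult_through_P: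
  assumes "v \<in> V0" shows "dot v (dot x w) = dot v (dot (P x) w)"
proof -
  have "dot x w = dot (P x) w + dot (x - P x) w" by (simp flip: dot_add_left)
  moreover have "dot v (dot (x - P x) w) = 0"
    using V0_V1_mult_zero[OF assms right_mult_V1[OF P_rest_mem]] .
  ultimately show ?thesis by (simp add: dot_add_right)
qed

lemma circ_LR_algebra: "LR_algebra scale circ"
proof -
  have "Vector_Spaces.linear scale scale (\<lambda>y. circ y w)" for w
    unfolding circ_def by (rule linear_right_mult)
  moreover have "Vector_Spaces.linear scale scale (\<lambda>y. circ x y)" for x
    unfolding circ_def using Vector_Spaces.linear_compose[OF linear_P linear_left_mult]
    by (simp add: comp_def)
  moreover have "circ x (circ y z) = dot (P y) (dot (P x) (P z))" for x y z
    unfolding circ_def P_right_mult left_comm[of x] using V0_left_mult_through_P[OF P_mem] by simp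
  moreover have "circ (circ x y) z = circ (circ x z) y" for x y z
    unfolding circ_def by (rule right_comm)
  ultimately show ?thesis
    unfolding LR_algebra_def bilinear_op_def module_hom_iff_linear by (metis left_comm)
qed

(* The modified product has the same commutator, since V1 is commutative. *)
lemma circ_commutator: "circ x y - circ y x = dot x y - dot y x"
proof -
  have V1_part: "dot x (y - P y) = dot (x - P x) (y - P y)" for x y
    using V0_V1_mult_zero[OF P_mem P_rest_mem, of x y] by (simp add: dot_diff_left)
  have "circ x y - circ y x = (dot x y - dot x (y - P y)) - (dot y x - dot y (x - P x))"
    unfolding circ_def by (simp add: dot_diff_right)
  also have "dot x (y - P y) = dot y (x - P x)"
    unfolding V1_part[of x y] V1_part[of y x] by (rule V1_commutative[OF P_rest_mem P_rest_mem])
  finally show ?thesis by simp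
qed

lemma circ_right_mult_V0: "x \<in> V0 \<Longrightarrow> circ x w = dot x w"
  unfolding circ_def using V0_V1_mult_zero[OF _ P_rest_mem, of x w] by (simp add: dot_diff_right)

(* On V1 it is the commutator with P(w), since P(w) . V1 = 0. *)
lemma circ_right_mult_V1: "a \<in> V1 \<Longrightarrow> circ a w = dot a (P w) - dot (P w) a"
  unfolding circ_def using V0_V1_mult_zero[OF P_mem] by simp

lemma circ_right_nilpotent:
  assumes ad: "nilpotent (\<lambda>y. dot y (P w) - dot (P w) y)"
    and A: "\<And>x. x \<in> V0 \<Longrightarrow> ((\<lambda>y. dot y w) ^^ A) x = 0"
  shows "nilpotent (\<lambda>y. circ y w)"
proof -
  obtain K where K: "(\<lambda>y. dot y (P w) - dot (P w) y) ^^ K = (\<lambda>_. 0)"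
    using ad unfolding nilpotent_def by blast
  have on_V0: "((\<lambda>y. circ y w) ^^ A) x = 0" if "x \<in> V0" for x
    using funpow_agree_on_invariant[of V0 "\<lambda>y. dot y w", OF right_mult_V0 circ_right_mult_V0 that]
      A[OF that] by simp
  have on_V1: "((\<lambda>y. circ y w) ^^ K) a = 0" if "a \<in> V1" for a
  proof -
    have "dot b (P w) - dot (P w) b \<in> V1" if "b \<in> V1" for b
      using that right_mult_V1 V0_V1_mult_zero[OF P_mem] by simp
    then show ?thesis
      using funpow_agree_on_invariant[of V1, OF _ circ_right_mult_V1 that] K by (simp add: fun_eq_iff)
  qed
  have "(\<lambda>y. circ y w) ^^ (A + K) = (\<lambda>_. 0)"
    using complement on_V0 on_V1 unfolding complementary_def
    by (intro nilpotent_from_complement[of "\<lambda>y. circ y w" V0 V1]) (auto simp: circ_def linear_right_mult)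
  then show ?thesis unfolding nilpotent_def by blast
qed

end

context LR_algebra_fd begin

lemma LR_algebra_fd_same_space: "LR_algebra scale c \<Longrightarrow> LR_algebra_fd scale Basis c"
  by (intro LR_algebra_fd.intro LR_algebra_fd_axioms.intro) unfold_locales

lemma complete_at_one_vector:
  assumes ad: "\<And>v. nilpotent (\<lambda>y. dot y v - dot v y)"
  obtains circ where "LR_algebra scale circ" and "\<And>x y. \<exists>a. circ x y = dot x a"
    and "\<And>x y. circ x y - circ y x = dot x y - dot y x"
    and "nilpotent (\<lambda>y. circ y u)"
    and "\<And>w. nilpotent (\<lambda>y. dot y w) \<Longrightarrow> nilpotent (\<lambda>y. circ y w)"
proof -
  let ?T = "\<lambda>y. dot y u"
  obtain N where c: "complementary scale {x. (?T ^^ N) x = 0} (range (?T ^^ N))"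
    and img: "range (?T ^^ N) \<subseteq> ?T ` range (?T ^^ N)"
    using fitting_decomposition[OF linear_right_mult] by blast
  interpret F: LR_fitting_split scale Basis dot u "{x. (?T ^^ N) x = 0}" "range (?T ^^ N)"
  proof (rule LR_fitting_split.intro[OF LR_algebra_fd_same_space[OF LR] LR_fitting_split_axioms.intro])
    fix S assume "Vector_Spaces.linear scale scale S" "\<And>y. S (dot y u) = dot (S y) u"
    then show "S ` {x. (?T ^^ N) x = 0} \<subseteq> {x. (?T ^^ N) x = 0} \<and> S ` range (?T ^^ N) \<subseteq> range (?T ^^ N)"
      using commuting_map_invariant[of S ?T N] by simp
  qed (use c img in auto)
  show ?thesis
  proof (rule that[of F.circ])
    show "LR_algebra scale F.circ" by (rule F.circ_LR_algebra)
    show "\<exists>a. F.circ x y = dot x a" for x y unfolding F.circ_def by blast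
    show "F.circ x y - F.circ y x = dot x y - dot y x" for x y by (rule F.circ_commutator)
    show "nilpotent (\<lambda>y. F.circ y u)" by (rule F.circ_right_nilpotent[where w = u and A = N, OF ad]) simp
    show "nilpotent (\<lambda>y. F.circ y w)" if nil_w: "nilpotent (\<lambda>y. dot y w)" for w
    proof -
      obtain A where "(\<lambda>y. dot y w) ^^ A = (\<lambda>_. 0)" using nil_w unfolding nilpotent_def by blast
      then show ?thesis by (intro F.circ_right_nilpotent[where w = w and A = A, OF ad]) simp
    qed
  qed
qed

lemma complete_on_finite_set:
  assumes ad: "\<And>v. nilpotent (\<lambda>y. dot y v - dot v y)" and "finite F"
  shows "\<exists>circ. LR_algebra scale circ \<and> (\<forall>x y. \<exists>a. circ x y = dot x a) \<and>
     (\<forall>x y. circ x y - circ y x = dot x y - dot y x) \<and> (\<forall>w\<in>F. nilpotent (\<lambda>y. circ y w))"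
  using \<open>finite F\<close>
proof (induction F rule: finite_induct)
  case empty
  show ?case using LR by blast
next
  case (insert b F)
  then obtain c1 where c1: "LR_algebra scale c1" "\<forall>x y. \<exists>a. c1 x y = dot x a"
    "\<forall>x y. c1 x y - c1 y x = dot x y - dot y x" "\<forall>w\<in>F. nilpotent (\<lambda>y. c1 y w)"
    by blast
  have ad1: "nilpotent (\<lambda>y. c1 y v - c1 v y)" for v using ad c1(3) by simp
  obtain c2 where c2: "LR_algebra scale c2" "\<And>x y. \<exists>a. c2 x y = c1 x a"
    "\<And>x y. c2 x y - c2 y x = c1 x y - c1 y x" "nilpotent (\<lambda>y. c2 y b)"
    "\<And>w. nilpotent (\<lambda>y. c1 y w) \<Longrightarrow> nilpotent (\<lambda>y. c2 y w)"
    using LR_algebra_fd.complete_at_one_vector[OF LR_algebra_fd_same_space[OF c1(1)] ad1] by blast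
  have "\<exists>a. c2 x y = dot x a" for x y using c2(2) c1(2) by metis
  then show ?case using c1 c2 by (intro exI[of _ c2]) auto
qed

lemma exists_complete_LR:
  assumes ad: "\<And>v. nilpotent (\<lambda>y. dot y v - dot v y)"
  obtains circ where "LR_algebra scale circ" and "\<And>x y. \<exists>a. circ x y = dot x a"
    and "\<And>x y. circ x y - circ y x = dot x y - dot y x" and "\<And>x. nilpotent (\<lambda>y. circ y x)"
proof -
  obtain circ where c: "LR_algebra scale circ" "\<forall>x y. \<exists>a. circ x y = dot x a"
     "\<forall>x y. circ x y - circ y x = dot x y - dot y x" "\<forall>w\<in>Basis. nilpotent (\<lambda>y. circ y w)"
    using complete_on_finite_set[OF ad finite_Basis] by blast
  show ?thesis
    using that[OF c(1)] c(2,3) LR_algebra_fd.complete_if_basis_complete[OF LR_algebra_fd_same_space[OF c(1)]] c(4)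
    by blast
qed

end

lemma lie_bracket_antisym:
  assumes "lie_algebra scale br" shows "br x y = - br y x"
proof -
  have add_left: "br (a + b) c = br a c + br b c" and add_right: "br c (a + b) = br c a + br c b" for a b c
    using assms unfolding lie_algebra_def bilinear_op_def by (auto dest: module_hom.add)
  have alt: "br a a = 0" for a using assms unfolding lie_algebra_def by blast
  have "br (x + y) (x + y) = br x x + br y x + (br x y + br y y)" by (simp only: add_left add_right)
  then have "br x y + br y x = 0" by (simp add: alt add.commute)
  then show ?thesis by (simp add: eq_neg_iff_add_eq_0)
qed

(* In a nilpotent Lie algebra every ad is nilpotent: its k-th iterate lands in g^k. *)
lemma nilpotent_lie_right_bracket:
  assumes lie: "lie_algebra scale br" and nil: "nilpotent_lie scale br"
  shows "nilpotent (\<lambda>y. br y v)"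
proof -
  interpret vector_space scale using lie unfolding lie_algebra_def by blast
  have "((\<lambda>y. br y v) ^^ k) z \<in> lower_central scale br k" for k z
  proof (induction k)
    case 0 show ?case by simp
  next
    case (Suc k)
    let ?a = "((\<lambda>y. br y v) ^^ k) z"
    have "br v ?a \<in> span {br x y | x y. y \<in> lower_central scale br k}"
      using Suc by (intro span_base) blast
    then have "- br v ?a \<in> span {br x y | x y. y \<in> lower_central scale br k}" by (rule span_neg)
    then show ?case using lie_bracket_antisym[OF lie, of ?a v] by simp
  qed
  moreover obtain n where "lower_central scale br n = {0}" using nil unfolding nilpotent_lie_def by blast
  ultimately have "(\<lambda>y. br y v) ^^ n = (\<lambda>_. 0)" by auto
  then show ?thesis unfolding nilpotent_def by blast
qed

lemma finite_dim_basis: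
  assumes "vector_space scale" and "finite_dim scale"
  obtains B where "finite_dimensional_vector_space scale B"
proof -
  interpret vector_space scale by (rule assms(1))
  obtain S where S: "finite S" "span S = UNIV" using assms(2) unfolding finite_dim_def by blast
  obtain B where B: "independent B" "UNIV \<subseteq> span B" using basis_exists[of UNIV] by blast
  have "finite B" using independent_span_bound[OF S(1) B(1)] S(2) by blast
  then have "finite_dimensional_vector_space scale B" using B by unfold_locales auto
  then show ?thesis by (rule that)
qed

theorem mainTheorem4:
  fixes scale :: "'k::field_char_0 \<Rightarrow> 'v::ab_group_add \<Rightarrow> 'v"
    and br :: "'v \<Rightarrow> 'v \<Rightarrow> 'v"
    and dot :: "'v \<Rightarrow> 'v \<Rightarrow> 'v"
  assumes "lie_algebra scale br"
    and "finite_dim scale"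
    and "nilpotent_lie scale br"
    and "LR_structure scale br dot"
  shows "\<exists>circ. LR_structure scale br circ \<and> complete_LR circ \<and>
           product_span scale circ \<subseteq> product_span scale dot"
proof -
  have vs: "vector_space scale" using assms(1) unfolding lie_algebra_def by blast
  obtain B where B: "finite_dimensional_vector_space scale B" using finite_dim_basis[OF vs assms(2)] .
  have LR: "LR_algebra scale dot" and commutator: "\<And>x y. dot x y - dot y x = br x y"
    using assms(4) unfolding LR_structure_def by blast+
  interpret LR_algebra_fd scale B dot by (rule LR_algebra_fd.intro[OF B LR_algebra_fd_axioms.intro[OF LR]])
  have ad: "nilpotent (\<lambda>y. dot y v - dot v y)" for v
    using nilpotent_lie_right_bracket[OF assms(1,3)] by (simp add: commutator)
  obtain circ where c: "LR_algebra scale circ" "\<And>x y. \<exists>a. circ x y = dot x a"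
    "\<And>x y. circ x y - circ y x = dot x y - dot y x" "\<And>x. nilpotent (\<lambda>y. circ y x)"
    using exists_complete_LR[OF ad] by blast
  have "LR_structure scale br circ" using c(1,3) commutator unfolding LR_structure_def by simp
  moreover have "complete_LR circ" using c(4) unfolding complete_LR_def nilpotent_def by blast
  moreover have "{circ x y | x y. True} \<subseteq> {dot x y | x y. True}" using c(2) by blast
  then have "product_span scale circ \<subseteq> product_span scale dot"
    unfolding product_span_def by (rule span_mono)
  ultimately show ?thesis by blast
qed

end
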